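(* Let $n\ge3$, $1\le s<n$, and let $D=\mathrm{pdiag}(d_1,\dots,d_n)$ with $d_1\le\dots\le d_s\le 0\le d_{s+1}\le\dots\le d_n$. Then for every integer $k\ge2$ and all $i,j\in[n]$, the $(i,j)$ entry of the max-plus power $D^k$ is $$(D^k)_{ij}=\begin{cases}(k-2)d_n & \text{if } \max(i,j)\le s,\\ \max\{k d_i,(k-2)d_n\} & \text{if } i=j>s,\\ \max\{(k-1)d_{\max(i,j)},(k-2)d_n\} & \text{if } i\neq j,\ \max(i,j)>s.\end{cases}$$
   Context: Max-plus conventions: $\varepsilon=-\infty$, $\oplus=\max$, $\otimes=+$; $(A\otimes B)_{ij}=\max_t(A_{it}+B_{tj})$ and $D^k$ is the $k$-fold max-plus product $D\otimes\cdots\otimes D$. $\mathrm{pdiag}(d_1,\dots,d_n)$ is the $n\times n$ matrix with real diagonal entries $d_1,\dots,d_n$ and all off-diagonal entries equal to the real number $0$. *)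

theory Defs
  imports "HOL-Library.Extended_Real"
begin

text \<open>Max-plus matrices of size n x n are represented as functions
  nat => nat => ereal, with indices ranging over {1..n}; the max-plus zero
  epsilon is -infinity (MInfty).\<close>

definition mp_mult :: "nat \<Rightarrow> (nat \<Rightarrow> nat \<Rightarrow> ereal) \<Rightarrow> (nat \<Rightarrow> nat \<Rightarrow> ereal) \<Rightarrow> (nat \<Rightarrow> nat \<Rightarrow> ereal)" where
  "mp_mult n A B = (\<lambda>i j. Max ((\<lambda>t. A i t + B t j) ` {1..n}))"

fun mp_pow :: "nat \<Rightarrow> (nat \<Rightarrow> nat \<Rightarrow> ereal) \<Rightarrow> nat \<Rightarrow> (nat \<Rightarrow> nat \<Rightarrow> ereal)" where
  "mp_pow n D 0 = D"
| "mp_pow n D (Suc 0) = D"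
| "mp_pow n D (Suc (Suc k)) = mp_mult n (mp_pow n D (Suc k)) D"

definition pdiag :: "(nat \<Rightarrow> real) \<Rightarrow> nat \<Rightarrow> nat \<Rightarrow> ereal" where
  "pdiag d = (\<lambda>i j. if i = j then ereal (d i) else 0)"

end

theory Submission
  imports Defs
begin

text \<open>Entry (i,j) of the k-th max-plus power of \<open>pdiag d\<close> is the maximal weight of a walk of
  length k from i to j in the complete digraph with loops, where the loop at t weighs \<open>d t\<close> and
  every other arc weighs 0. Since \<open>d\<close> increases and changes sign after s, an optimal walk either
  moves to \<open>max i j\<close> at once and loops there, or detours through n and spends its remaining
  k - 2 steps on the loop at n. For k = 2 and \<open>max i j \<le> s\<close> the best walk passes through a
  vertex outside \<open>{i, j}\<close>, which exists because n \<ge> 3.\<close>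

lemma Max_image_eqI:
  fixes f :: "'a \<Rightarrow> 'b::linorder"
  assumes "finite S" "\<And>t. t \<in> S \<Longrightarrow> f t \<le> c" "\<exists>t\<in>S. c \<le> f t"
  shows "Max (f ` S) = c"
proof -
  have "S \<noteq> {}" using assms(3) by blast
  then show ?thesis using assms by (intro antisym) (auto simp: Max_le_iff Max_ge_iff)
qed

lemma mp_mult_pdiag_right:
  "mp_mult n A (pdiag d) i j = Max ((\<lambda>t. A i t + ereal (if t = j then d j else 0)) ` {1..n})"
  by (simp add: mp_mult_def pdiag_def zero_ereal_def if_distrib)

locale sign_split_diag =
  fixes n s :: nat and d :: "nat \<Rightarrow> real"
  assumes three_le_n: "3 \<le> n" and s_less_n: "s < n"
    and d_mono: "\<And>i j. 1 \<le> i \<Longrightarrow> i \<le> j \<Longrightarrow> j \<le> n \<Longrightarrow> d i \<le> d j"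
    and d_s_nonpos: "d s \<le> 0" and d_Suc_s_nonneg: "0 \<le> d (s + 1)"
begin

definition power_formula :: "real \<Rightarrow> nat \<Rightarrow> nat \<Rightarrow> real" where
  "power_formula K i j =
    (if max i j \<le> s then (K - 2) * d n
     else if i = j then max (K * d i) ((K - 2) * d n)
     else max ((K - 1) * d (max i j)) ((K - 2) * d n))"

lemma d_nonpos: "1 \<le> t \<Longrightarrow> t \<le> s \<Longrightarrow> d t \<le> 0"
  using d_mono[of t s] d_s_nonpos s_less_n by auto

lemma d_nonneg: "s < t \<Longrightarrow> t \<le> n \<Longrightarrow> 0 \<le> d t"
  using d_mono[of "s + 1" t] d_Suc_s_nonneg by auto

lemma d_le_d_n: "t \<in> {1..n} \<Longrightarrow> d t \<le> d n"
  using d_mono[of t n] by auto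

lemma d_n_nonneg: "0 \<le> d n"
  using d_nonneg[of n] s_less_n by auto

lemma d_le_d_max: "i \<in> {1..n} \<Longrightarrow> j \<in> {1..n} \<Longrightarrow> d i \<le> d (max i j) \<and> d j \<le> d (max i j)"
  using d_mono[of i j] d_mono[of j i] by (auto simp: max_def)

lemma power_formula_ge: "(K - 2) * d n \<le> power_formula K i j"
  by (simp add: power_formula_def)

lemma power_formula_offdiag_le:
  assumes "1 \<le> K" "i \<in> {1..n}" "j \<in> {1..n}" "i \<noteq> j"
  shows "power_formula K i j \<le> (K - 1) * d n"
proof -
  have "max i j \<in> {1..n}" using assms(2,3) by auto
  then have "(K - 1) * d (max i j) \<le> (K - 1) * d n"
    using d_le_d_n assms(1) by (simp add: mult_left_mono)
  then show ?thesis using assms(4) d_n_nonneg by (auto simp: power_formula_def algebra_simps)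
qed

lemma power_formula_step_le:
  assumes K: "1 \<le> K" and i: "i \<in> {1..n}" and j: "j \<in> {1..n}" and t: "t \<in> {1..n}"
  shows "power_formula K i t + (if t = j then d j else 0) \<le> power_formula (K + 1) i j"
proof -
  have floor: "(K - 1) * d n \<le> power_formula (K + 1) i j"
    using power_formula_ge[of "K + 1" i j] by simp
  have d_j: "d j \<le> d n" "d j \<le> d (max i j)" using d_le_d_n[OF j] d_le_d_max[OF i j] by auto
  consider "t \<noteq> j" "i \<noteq> t" | "t \<noteq> j" "i = t" | "t = j" by blast
  then show ?thesis
  proof cases
    case 1
    then show ?thesis using power_formula_offdiag_le[OF K i t] floor by simp
  next
    case 2
    have "K * d i \<le> K * d (max i j)" using d_le_d_max[OF i j] K by (simp add: mult_left_mono)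
    then show ?thesis using 2 floor d_n_nonneg
      by (auto simp: power_formula_def algebra_simps max_def)
  next
    case 3
    show ?thesis
    proof (cases "max i j \<le> s")
      case True
      then show ?thesis using 3 d_nonpos[of j] j d_n_nonneg
        by (simp add: power_formula_def algebra_simps)
    qed (use 3 d_j in \<open>auto simp: power_formula_def algebra_simps max_def\<close>)
  qed
qed

lemma power_formula_step_attained:
  assumes K: "1 \<le> K" and i: "i \<in> {1..n}" and j: "j \<in> {1..n}"
  shows "\<exists>t\<in>{1..n}. power_formula (K + 1) i j \<le> power_formula K i t + (if t = j then d j else 0)"
proof -
  let ?h = "\<lambda>t. power_formula K i t + (if t = j then d j else 0)"
  have n: "n \<in> {1..n}" using s_less_n by auto
  have "(K - 1) * d n \<le> power_formula K i n"
    using i s_less_n d_n_nonneg by (auto simp: power_formula_def algebra_simps max_def)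
  then have via_n: "(K - 1) * d n \<le> ?h n" using d_n_nonneg by auto
  have direct: "K * d (max i j) \<le> ?h (max i j)" if "i \<noteq> j" "s < max i j"
    using that by (auto simp: power_formula_def algebra_simps max_def)
  have diag: "(K + 1) * d i \<le> ?h i" if "i = j" "s < i"
    using that by (auto simp: power_formula_def algebra_simps)
  have max_in: "max i j \<in> {1..n}" using i j by auto
  show ?thesis
  proof (cases "max i j \<le> s")
    case True
    then have "power_formula (K + 1) i j = (K - 1) * d n" by (simp add: power_formula_def)
    then show ?thesis using via_n n by (intro bexI[of _ n]) auto
  next
    case False
    then have "power_formula (K + 1) i j \<le> ?h n \<or> power_formula (K + 1) i j \<le> ?h (max i j)"
      using via_n direct diag by (auto simp: power_formula_def algebra_simps)
    then show ?thesis using n max_in by blast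
  qed
qed

lemma mp_mult_pdiag_power_formula:
  assumes K: "1 \<le> K" and i: "i \<in> {1..n}" and j: "j \<in> {1..n}"
    and A: "\<And>a b. a \<in> {1..n} \<Longrightarrow> b \<in> {1..n} \<Longrightarrow> A a b = ereal (power_formula K a b)"
  shows "mp_mult n A (pdiag d) i j = ereal (power_formula (K + 1) i j)"
  unfolding mp_mult_pdiag_right
proof (rule Max_image_eqI)
  show "A i t + ereal (if t = j then d j else 0) \<le> ereal (power_formula (K + 1) i j)"
    if "t \<in> {1..n}" for t
    using power_formula_step_le[OF K i j that] A[OF i that] by simp
  show "\<exists>t\<in>{1..n}. ereal (power_formula (K + 1) i j) \<le> A i t + ereal (if t = j then d j else 0)"
    using power_formula_step_attained[OF K i j] A[OF i] by auto
qed simp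

lemma exists_vertex_avoiding: "\<exists>t\<in>{1..n}. t \<noteq> i \<and> t \<noteq> j"
proof -
  have "card {i, j} \<le> 2" by (simp add: card_insert_le_m1)
  then have "card {i, j} < card {1..n}" using three_le_n by simp
  then have "\<not> {1..n} \<subseteq> {i, j}" by (meson card_mono finite.emptyI finite.insertI not_le)
  then show ?thesis by blast
qed

lemma mp_mult_pdiag_pdiag:
  assumes i: "i \<in> {1..n}" and j: "j \<in> {1..n}"
  shows "mp_mult n (pdiag d) (pdiag d) i j = ereal (power_formula 2 i j)"
  unfolding mp_mult_pdiag_right
proof (rule Max_image_eqI)
  show "pdiag d i t + ereal (if t = j then d j else 0) \<le> ereal (power_formula 2 i j)" for t
  proof (cases "max i j \<le> s")
    case True
    then show ?thesis using d_nonpos[of i] d_nonpos[of j] i j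
      by (auto simp: pdiag_def zero_ereal_def power_formula_def)
  next
    case False
    then have "0 \<le> d (max i j)" using d_nonneg[of "max i j"] i j by auto
    then show ?thesis using False d_le_d_max[OF i j]
      by (auto simp: pdiag_def zero_ereal_def power_formula_def)
  qed
  obtain t0 where t0: "t0 \<in> {1..n}" "t0 \<noteq> i" "t0 \<noteq> j" using exists_vertex_avoiding by blast
  show "\<exists>t\<in>{1..n}. ereal (power_formula 2 i j) \<le> pdiag d i t + ereal (if t = j then d j else 0)"
  proof (cases "max i j \<le> s")
    case True
    then show ?thesis using t0 by (auto simp: pdiag_def zero_ereal_def power_formula_def)
  next
    case False
    have "max i j \<in> {1..n}" using i j by auto
    then show ?thesis using False t0
      by (cases "i = j") (auto simp: pdiag_def zero_ereal_def power_formula_def max_def)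
  qed
qed simp

lemma mp_pow_pdiag:
  assumes "2 \<le> k" "i \<in> {1..n}" "j \<in> {1..n}"
  shows "mp_pow n (pdiag d) k i j = ereal (power_formula (real k) i j)"
  using assms
proof (induction k arbitrary: i j rule: dec_induct)
  case base
  then show ?case using mp_mult_pdiag_pdiag by (simp add: numeral_2_eq_2)
next
  case (step k)
  then obtain k' where "k = Suc k'" by (cases k) auto
  then have "mp_pow n (pdiag d) (Suc k) = mp_mult n (mp_pow n (pdiag d) k) (pdiag d)" by simp
  then show ?case
    using mp_mult_pdiag_power_formula[of "real k"] step by (simp add: add.commute)
qed

end

theorem proposition4p4:
  fixes n s :: nat and d :: "nat \<Rightarrow> real"
  assumes "n \<ge> 3" and "1 \<le> s" and "s < n"
    and "\<And>i j. 1 \<le> i \<Longrightarrow> i \<le> j \<Longrightarrow> j \<le> n \<Longrightarrow> d i \<le> d j"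
    and "d s \<le> 0" and "0 \<le> d (s + 1)"
    and "k \<ge> (2::nat)" and "i \<in> {1..n}" and "j \<in> {1..n}"
  shows "mp_pow n (pdiag d) k i j =
    (if max i j \<le> s then ereal ((real k - 2) * d n)
     else if i = j then ereal (max (real k * d i) ((real k - 2) * d n))
     else ereal (max ((real k - 1) * d (max i j)) ((real k - 2) * d n)))"
proof -
  interpret sign_split_diag n s d using assms(1,3-6) by unfold_locales auto
  show ?thesis using mp_pow_pdiag[OF assms(7-9)] by (simp add: power_formula_def)
qed

end
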